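(* For all even integers $n\ge2$ and real numbers $a\ge1$, $x\in(0,\pi)$, we have $S^*_{n,a}(x)\ge 2\sin(x)$. Equality holds if and only if $n=2$, $a=1$ (any $x$), or $n=4$, $a=1$, $x=\pi/2$.
   Context: For a real number $a$ and integers $0\le m$, $\binom{m+a}{m}=\frac{(a+1)(a+2)\cdots(a+m)}{m!}$ (equal to $1$ when $m=0$). For an integer $n\ge1$, $S^*_{n,a}(x)=\sum_{1\le j\le n,\ j\text{ odd}}\binom{n+a-j}{n-j}\sin(jx)$. *)

theory Defs
  imports Complex_Main
begin

text \<open>binom_ma m a = binomial coefficient (m+a choose m) = (a+1)(a+2)...(a+m)/m!, for real a.\<close>
definition binom_ma :: "nat \<Rightarrow> real \<Rightarrow> real" where
  "binom_ma m a = (\<Prod>i=1..m. (a + real i)) / fact m"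

definition S_star :: "nat \<Rightarrow> real \<Rightarrow> real \<Rightarrow> real" where
  "S_star n a x = (\<Sum>j\<in>{j. 1 \<le> j \<and> j \<le> n \<and> odd j}. binom_ma (n - j) a * sin (real j * x))"

end

theory Submission
  imports Defs
begin

(*
  Let n = 2m, and let d_k = binom(n-2k-1+a, n-2k-1) for k < m and d_m = 0, so that
  S*(x) = \<Sum>_{k<m} d_k sin((2k+1)x). Since sin x sin((2k+1)x) = sin^2((k+1)x) - sin^2(kx),
  summation by parts gives sin x * S*(x) = \<Sum>_{j=1..m} (d_{j-1} - d_j) sin^2(jx).
  Each d_{j-1} - d_j is either a difference of binomial coefficients two steps apart or
  d_{m-1} = a + 1; in both cases it is at least a + 1 \<ge> 2, with equality iff a = 1.
  Keeping only the term 2 sin^2 x gives the inequality; equality forces a = 1 and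
  sin(jx) = 0 for 2 \<le> j \<le> m, which on (0, \<pi>) happens only for m = 1, or m = 2 and x = \<pi>/2.
*)

lemma binom_ma_0 [simp]: "binom_ma 0 a = 1"
  by (simp add: binom_ma_def)

lemma binom_ma_Suc: "binom_ma (Suc r) a = binom_ma r a * (a + real (Suc r)) / real (Suc r)"
  by (simp add: binom_ma_def prod.cl_ivl_Suc field_simps del: of_nat_Suc)

lemma binom_ma_at_1: "binom_ma r 1 = real r + 1"
  by (induction r) (simp_all add: binom_ma_Suc field_simps)

lemma binom_ma_mono:
  assumes "-1 \<le> a" and "a \<le> b"
  shows "binom_ma r a \<le> binom_ma r b"
  unfolding binom_ma_def
  by (intro divide_right_mono prod_mono) (use assms in auto)

lemma binom_ma_ge:
  assumes "1 \<le> a"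
  shows "real r + 1 \<le> binom_ma r a"
  using binom_ma_mono[of 1 a r] assms by (simp add: binom_ma_at_1)

lemma binom_ma_Suc_diff_ge:
  assumes "1 \<le> a"
  shows "a \<le> binom_ma (Suc r) a - binom_ma r a"
proof -
  have "binom_ma (Suc r) a - binom_ma r a = a * binom_ma r a / (real r + 1)"
    by (simp add: binom_ma_Suc field_simps)
  also have "a * (real r + 1) / (real r + 1) \<le> \<dots>"
    using assms binom_ma_ge[OF assms, of r] by (intro divide_right_mono mult_left_mono) auto
  finally show ?thesis
    by simp
qed

(* d_{m-1-q} - d_{m-q} in the notation above *)
definition binom_odd_gap :: "nat \<Rightarrow> real \<Rightarrow> real" where
  "binom_odd_gap q a = binom_ma (2 * q + 1) a - (if q = 0 then 0 else binom_ma (2 * q - 1) a)"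

lemma binom_odd_gap_ge:
  assumes "1 \<le> a"
  shows "a + 1 \<le> binom_odd_gap q a"
proof (cases q)
  case 0
  then show ?thesis
    by (simp add: binom_odd_gap_def binom_ma_Suc)
next
  case (Suc p)
  then have "binom_odd_gap q a =
      (binom_ma (Suc (2 * p + 2)) a - binom_ma (2 * p + 2) a)
      + (binom_ma (Suc (2 * p + 1)) a - binom_ma (2 * p + 1) a)"
    by (simp add: binom_odd_gap_def)
  then show ?thesis
    using binom_ma_Suc_diff_ge[OF assms, of "2 * p + 2"] binom_ma_Suc_diff_ge[OF assms, of "2 * p + 1"]
      assms by linarith
qed

lemma binom_odd_gap_excess_nonneg: "1 \<le> a \<Longrightarrow> 0 \<le> binom_odd_gap q a - 2"
  using binom_odd_gap_ge[of a q] by linarith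

lemma binom_odd_gap_at_1: "binom_odd_gap q 1 = 2"
  by (simp add: binom_odd_gap_def binom_ma_at_1)

lemma sum_lessThan_by_parts:
  fixes f g :: "nat \<Rightarrow> 'a :: comm_ring"
  shows "(\<Sum>k<m. f k * (g (Suc k) - g k))
           = f m * g m - f 0 * g 0 - (\<Sum>k<m. (f (Suc k) - f k) * g (Suc k))"
  by (induction m) (simp_all add: algebra_simps)

lemma sin_squared_Suc_diff:
  "sin (real (Suc k) * x)^2 - sin (real k * x)^2 = sin x * sin (real (2 * k + 1) * x)"
proof -
  have "x - real (2 * k + 1) * x = - (2 * (real k * x))"
    and "x + real (2 * k + 1) * x = 2 * (real (Suc k) * x)"
    by (simp_all add: algebra_simps)
  then have "sin x * sin (real (2 * k + 1) * x)
      = (cos (2 * (real k * x)) - cos (2 * (real (Suc k) * x))) / 2"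
    unfolding sin_times_sin cos_minus by simp
  then show ?thesis
    by (simp add: cos_double_sin)
qed

lemma S_star_even:
  "S_star (2 * m) a x = (\<Sum>k<m. binom_ma (2 * (m - k) - 1) a * sin (real (2 * k + 1) * x))"
proof -
  have odd_le: "{j. 1 \<le> j \<and> j \<le> 2 * m \<and> odd j} = (\<lambda>k. 2 * k + 1) ` {..<m}"
  proof (intro set_eqI iffI)
    fix j
    assume "j \<in> {j. 1 \<le> j \<and> j \<le> 2 * m \<and> odd j}"
    then have "j = 2 * (j div 2) + 1" and "j div 2 < m"
      by auto presburger+
    then show "j \<in> (\<lambda>k. 2 * k + 1) ` {..<m}"
      by blast
  qed auto
  have "inj_on (\<lambda>k::nat. 2 * k + 1) {..<m}"
    by (auto simp: inj_on_def)
  moreover have "2 * m - (2 * k + 1) = 2 * (m - k) - 1" for k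
    by simp
  ultimately show ?thesis
    unfolding S_star_def odd_le by (simp add: sum.reindex)
qed

lemma sin_mult_S_star_even:
  "sin x * S_star (2 * m) a x = (\<Sum>j=1..m. binom_odd_gap (m - j) a * sin (real j * x)^2)"
proof -
  define d where "d k = (if k < m then binom_ma (2 * (m - k) - 1) a else 0)" for k
  define t where "t k = sin (real k * x)^2" for k
  have gap: "d k - d (Suc k) = binom_odd_gap (m - Suc k) a" if "k < m" for k
  proof (cases "Suc k < m")
    case True
    then have "2 * (m - k) - 1 = 2 * (m - Suc k) + 1"
      by arith
    with True that have "d k = binom_ma (2 * (m - Suc k) + 1) a"
      and "d (Suc k) = binom_ma (2 * (m - Suc k) - 1) a"
      by (simp_all add: d_def)
    with True show ?thesis
      by (simp add: binom_odd_gap_def)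
  next
    case False
    with that have "m = Suc k"
      by simp
    then show ?thesis
      by (simp add: d_def binom_odd_gap_def)
  qed
  have "sin x * S_star (2 * m) a x = (\<Sum>k<m. d k * (sin x * sin (real (2 * k + 1) * x)))"
    unfolding S_star_even sum_distrib_left by (intro sum.cong) (simp_all add: d_def)
  also have "\<dots> = (\<Sum>k<m. d k * (t (Suc k) - t k))"
    by (simp only: t_def sin_squared_Suc_diff)
  also have "\<dots> = - (\<Sum>k<m. (d (Suc k) - d k) * t (Suc k))"
    using sum_lessThan_by_parts[of d t m] by (simp add: d_def t_def)
  also have "\<dots> = (\<Sum>k<m. (d k - d (Suc k)) * t (Suc k))"
    by (simp add: sum_negf[symmetric] algebra_simps)
  also have "\<dots> = (\<Sum>k<m. binom_odd_gap (m - Suc k) a * t (Suc k))"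
    by (rule sum.cong) (simp_all add: gap)
  finally show ?thesis
    by (simp add: sum.atLeast1_atMost_eq t_def)
qed

lemma sin_mult_S_star_even_minus:
  assumes "1 \<le> m"
  shows "sin x * (S_star (2 * m) a x - 2 * sin x)
           = (\<Sum>j=1..m. (binom_odd_gap (m - j) a - 2) * sin (real j * x)^2)
             + 2 * (\<Sum>j=2..m. sin (real j * x)^2)"
proof -
  have "(\<Sum>j=1..m. sin (real j * x)^2) = sin x ^ 2 + (\<Sum>j=2..m. sin (real j * x)^2)"
    using assms by (simp add: sum.atLeast_Suc_atMost numeral_2_eq_2)
  moreover have "(\<Sum>j=1..m. (binom_odd_gap (m - j) a - 2) * sin (real j * x)^2)
      = (\<Sum>j=1..m. binom_odd_gap (m - j) a * sin (real j * x)^2)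
        - 2 * (\<Sum>j=1..m. sin (real j * x)^2)"
    by (simp add: left_diff_distrib sum_subtractf sum_distrib_left)
  ultimately show ?thesis
    by (simp add: right_diff_distrib sin_mult_S_star_even power2_eq_square)
qed

lemma sum_binom_odd_gap_excess_eq_0_iff:
  assumes "1 \<le> a" and "1 \<le> m" and "sin x \<noteq> 0"
  shows "(\<Sum>j=1..m. (binom_odd_gap (m - j) a - 2) * sin (real j * x)^2) = 0 \<longleftrightarrow> a = 1"
proof
  assume "(\<Sum>j=1..m. (binom_odd_gap (m - j) a - 2) * sin (real j * x)^2) = 0"
  moreover have "\<forall>j\<in>{1..m}. 0 \<le> (binom_odd_gap (m - j) a - 2) * sin (real j * x)^2"
    using binom_odd_gap_excess_nonneg[OF assms(1)] by simp
  ultimately have "(binom_odd_gap (m - 1) a - 2) * sin x ^ 2 = 0"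
    using assms(2) by (subst (asm) sum_nonneg_eq_0_iff) auto
  then have "binom_odd_gap (m - 1) a = 2"
    using assms(3) by simp
  then show "a = 1"
    using binom_odd_gap_ge[OF assms(1), of "m - 1"] assms(1) by simp
qed (simp add: binom_odd_gap_at_1)

lemma sin_multiples_vanish_iff:
  assumes "0 < x" and "x < pi"
  shows "(\<forall>j\<in>{2..m}. sin (real j * x) = 0) \<longleftrightarrow> m \<le> 1 \<or> (m = 2 \<and> x = pi / 2)"
proof
  assume vanish: "\<forall>j\<in>{2..m}. sin (real j * x) = 0"
  show "m \<le> 1 \<or> (m = 2 \<and> x = pi / 2)"
  proof (cases "m \<le> 1")
    case False
    then have "sin (2 * x) = 0"
      using vanish by force
    then have "cos x = 0"
      using sin_gt_zero[OF assms] by (simp add: sin_double)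
    then have x: "x = pi / 2"
      using cos_inj_pi[of x "pi / 2"] assms by simp
    have "m < 3"
    proof (rule ccontr)
      assume "\<not> m < 3"
      then have "sin (3 * x) = 0"
        using vanish[rule_format, of 3] by simp
      moreover have "3 * x = pi / 2 + pi"
        using x by simp
      ultimately show False
        by (simp only: sin_periodic_pi sin_pi_half)
    qed
    with False x show ?thesis
      by simp
  qed simp
qed (auto simp: mult.commute)

theorem theorem3p6:
  fixes n :: nat and a x :: real
  assumes "even n" and "n \<ge> 2" and "a \<ge> 1" and "0 < x" and "x < pi"
  shows "S_star n a x \<ge> 2 * sin x \<and>
         (S_star n a x = 2 * sin x \<longleftrightarrow>
            (n = 2 \<and> a = 1) \<or> (n = 4 \<and> a = 1 \<and> x = pi / 2))"
proof -
  obtain m where n: "n = 2 * m" and m: "1 \<le> m"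
    using assms(1,2) by fastforce
  define E where "E = (\<Sum>j=1..m. (binom_odd_gap (m - j) a - 2) * sin (real j * x)^2)"
  define B where "B = (\<Sum>j=2..m. sin (real j * x)^2)"
  have sin_pos: "0 < sin x"
    using sin_gt_zero assms(4,5) by blast
  have excess: "sin x * (S_star n a x - 2 * sin x) = E + 2 * B"
    unfolding n E_def B_def using m by (rule sin_mult_S_star_even_minus)
  have E_nonneg: "0 \<le> E"
    unfolding E_def using binom_odd_gap_excess_nonneg[OF assms(3)] by (simp add: sum_nonneg)
  have B_nonneg: "0 \<le> B"
    unfolding B_def by (simp add: sum_nonneg)
  have E_eq_0: "E = 0 \<longleftrightarrow> a = 1"
    unfolding E_def using sin_pos by (intro sum_binom_odd_gap_excess_eq_0_iff assms(3) m) simp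
  have B_eq_0: "B = 0 \<longleftrightarrow> m \<le> 1 \<or> (m = 2 \<and> x = pi / 2)"
    unfolding B_def sin_multiples_vanish_iff[OF assms(4,5), symmetric]
    by (simp add: sum_nonneg_eq_0_iff)
  have "0 \<le> sin x * (S_star n a x - 2 * sin x)"
    using excess E_nonneg B_nonneg by simp
  then have "2 * sin x \<le> S_star n a x"
    using sin_pos by (simp add: zero_le_mult_iff)
  moreover have "S_star n a x = 2 * sin x \<longleftrightarrow> E = 0 \<and> B = 0"
    using excess E_nonneg B_nonneg sin_pos by auto
  ultimately show ?thesis
    using E_eq_0 B_eq_0 m n by auto
qed

end
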